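(* Assume $d\ge1$. For $0\le i\le d-2$, $$a^*_i+a^*_{i+1}=d-\frac{r-s}{2}+\frac{(r-s)(r+s)(2d+r+s+2)}{2(2d-2i+r+s-2)(2d-2i+r+s+2)},$$ and $$a^*_{d-1}+a^*_d=d+\frac{(d-1)(r-s)}{r+s+4}.$$
   Context: Fix an integer $d\ge0$ and $r,s\in(-1,\infty)$. Write $(x)_i=x(x+1)\cdots(x+i-1)$, $(x)_0=1$. For $0\le i\le d$ put $\theta^*_i=i$. Put $b^*_i=\frac{(d-i)(i-d-s)(2d-2i+r+s+2)_i}{(2d-2i+r+s)_{i+1}}$ ($0\le i\le d-1$), $c^*_i=\frac{i(i-d-r-1)(d-i+r+s+1)_{d-i}}{(d-i+r+s+2)_{d-i+1}}$ ($1\le i\le d$), $b^*_d=c^*_0=0$, and $a^*_i=\theta^*_0-b^*_i-c^*_i$ for $0\le i\le d$. *)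

theory Defs
  imports Complex_Main
begin

definition thetaS :: "nat \<Rightarrow> real" where
  "thetaS i = real i"

definition bS :: "nat \<Rightarrow> real \<Rightarrow> real \<Rightarrow> nat \<Rightarrow> real" where
  "bS d r s i = (if i < d then
     (real d - real i) * (real i - real d - s) * pochhammer (2 * real d - 2 * real i + r + s + 2) i
       / pochhammer (2 * real d - 2 * real i + r + s) (i + 1)
   else 0)"

definition cS :: "nat \<Rightarrow> real \<Rightarrow> real \<Rightarrow> nat \<Rightarrow> real" where
  "cS d r s i = (if i = 0 then 0 else
     real i * (real i - real d - r - 1) * pochhammer (real d - real i + r + s + 1) (d - i)
       / pochhammer (real d - real i + r + s + 2) (d - i + 1))"

definition aS :: "nat \<Rightarrow> real \<Rightarrow> real \<Rightarrow> nat \<Rightarrow> real" where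
  "aS d r s i = thetaS 0 - bS d r s i - cS d r s i"

end

theory Submission
  imports Defs
begin

text \<open>For \<open>i < d\<close> the Pochhammer quotients in \<open>b\<^sup>*\<^sub>i\<close> and \<open>c\<^sup>*\<^sub>i\<close> telescope
  to quotients of linear factors, so \<open>a\<^sup>*\<^sub>i = a(i)\<close> for an explicit rational function
  \<open>a(t)\<close>, while \<open>a\<^sup>*\<^sub>d = d (r + 1) / (r + s + 2)\<close>. Both claims then become
  rational identities in \<open>d, r, s, t\<close>, verified by clearing denominators.\<close>

lemma pochhammer_shift2_ratio:
  fixes x :: "'a :: linordered_field"
  assumes "x > 0"
  shows "pochhammer (x + 2) n / pochhammer x (Suc n) = (x + of_nat n + 1) / (x * (x + 1))"
proof -
  have "x * (x + 1) * pochhammer (x + 2) n = pochhammer x (Suc (Suc n))"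
    by (simp add: pochhammer_rec mult.assoc add.assoc one_add_one)
  also have "\<dots> = (x + of_nat n + 1) * pochhammer x (Suc n)"
    by (simp add: pochhammer_rec' add.assoc)
  finally have "x * (x + 1) * pochhammer (x + 2) n = (x + of_nat n + 1) * pochhammer x (Suc n)" .
  moreover have "pochhammer x (Suc n) > 0" "x + 1 > 0"
    using assms by (simp_all add: pochhammer_pos add_pos_pos)
  ultimately show ?thesis
    using assms by (simp add: divide_simps mult.commute)
qed

lemma pochhammer_shift1_ratio:
  fixes y :: "'a :: linordered_field"
  assumes "y > 0"
  shows "pochhammer y m / pochhammer (y + 1) (Suc m) = y / ((y + of_nat m) * (y + of_nat m + 1))"
proof -
  have "y * pochhammer (y + 1) (Suc m) = pochhammer y (Suc (Suc m))"
    by (simp only: pochhammer_rec)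
  also have "\<dots> = (y + of_nat m) * (y + of_nat m + 1) * pochhammer y m"
    by (simp add: pochhammer_rec' algebra_simps)
  finally have "y * pochhammer (y + 1) (Suc m) = (y + of_nat m) * (y + of_nat m + 1) * pochhammer y m" .
  moreover have "pochhammer (y + 1) (Suc m) > 0" "y + of_nat m > 0"
    using assms by (simp_all add: pochhammer_pos add_pos_nonneg)
  ultimately show ?thesis
    using assms by (simp add: divide_simps mult.commute)
qed

definition aS_rat :: "real \<Rightarrow> real \<Rightarrow> real \<Rightarrow> real \<Rightarrow> real" where
  "aS_rat D r s t =
     - ((D - t) * (t - D - s) * (2 * D - t + r + s + 1)
         / ((2 * D - 2 * t + r + s) * (2 * D - 2 * t + r + s + 1)))
     - t * (t - D - r - 1) * (D - t + r + s + 1)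
         / ((2 * D - 2 * t + r + s + 1) * (2 * D - 2 * t + r + s + 2))"

lemma bS_closed_form:
  assumes "i < d" and "r + s > -2"
  shows "bS d r s i = (real d - real i) * (real i - real d - s) * (2 * real d - real i + r + s + 1)
           / ((2 * real d - 2 * real i + r + s) * (2 * real d - 2 * real i + r + s + 1))"
proof -
  define x where "x = 2 * real d - 2 * real i + r + s"
  have "x > 0"
    using assms unfolding x_def by linarith
  have "bS d r s i = (real d - real i) * (real i - real d - s)
          * (pochhammer (x + 2) i / pochhammer x (Suc i))"
    using assms(1) by (simp add: bS_def x_def)
  also have "\<dots> = (real d - real i) * (real i - real d - s) * ((x + real i + 1) / (x * (x + 1)))"
    by (simp only: pochhammer_shift2_ratio[OF \<open>x > 0\<close>])
  finally show ?thesis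
    by (simp add: x_def add_ac)
qed

lemma cS_closed_form:
  assumes "i < d" and "r + s > -2"
  shows "cS d r s i = real i * (real i - real d - r - 1) * (real d - real i + r + s + 1)
           / ((2 * real d - 2 * real i + r + s + 1) * (2 * real d - 2 * real i + r + s + 2))"
proof -
  define y where "y = real d - real i + r + s + 1"
  have "y > 0"
    using assms unfolding y_def by linarith
  have "cS d r s i = real i * (real i - real d - r - 1)
          * (pochhammer y (d - i) / pochhammer (y + 1) (Suc (d - i)))"
    by (simp add: cS_def y_def add_ac)
  also have "\<dots> = real i * (real i - real d - r - 1)
          * (y / ((y + real (d - i)) * (y + real (d - i) + 1)))"
    by (simp only: pochhammer_shift1_ratio[OF \<open>y > 0\<close>])
  finally show ?thesis
    using assms(1) by (simp add: y_def of_nat_diff add_ac)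
qed

lemma aS_eq_aS_rat:
  assumes "i < d" and "r + s > -2"
  shows "aS d r s i = aS_rat (real d) r s (real i)"
  using assms by (simp add: aS_def thetaS_def aS_rat_def bS_closed_form cS_closed_form)

lemma aS_last: "aS d r s d = real d * (r + 1) / (r + s + 2)"
proof -
  have "aS d r s d = - (real d * (- r - 1) / (r + s + 2))"
    by (simp add: aS_def thetaS_def bS_def cS_def)
  also have "\<dots> = real d * (r + 1) / (r + s + 2)"
    by (metis minus_diff_eq minus_mult_right minus_divide_left diff_minus_eq_add add.commute)
  finally show ?thesis .
qed

lemma aS_rat_consecutive_sum:
  assumes "2 * D - 2 * t + r + s > 2"
  shows "aS_rat D r s t + aS_rat D r s (t + 1) =
           D - (r - s) / 2
           + (r - s) * (r + s) * (2 * D + r + s + 2)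
             / (2 * (2 * D - 2 * t + r + s - 2) * (2 * D - 2 * t + r + s + 2))"
proof -
  \<comment> \<open>Eliminating \<open>s\<close> makes every denominator a positive shift \<open>y + k\<close> of one variable.\<close>
  obtain y where "y > 0" and s: "s = y + 2 - 2 * D + 2 * t - r"
    using assms by (intro that[of "2 * D - 2 * t + r + s - 2"]) auto
  then have "y + 1 > 0" "y + 2 > 0" "y + 3 > 0" "y + 4 > 0"
    by linarith+
  with \<open>y > 0\<close> show ?thesis
    unfolding aS_rat_def s by (simp add: divide_simps) (simp add: algebra_simps)
qed

lemma aS_rat_last_sum:
  assumes "r + s > -2"
  shows "aS_rat D r s (D - 1) + D * (r + 1) / (r + s + 2) = D + (D - 1) * (r - s) / (r + s + 4)"
proof -
  obtain u where "u > 0" and s: "s = u - 2 - r"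
    using assms by (intro that[of "r + s + 2"]) auto
  then have "u + 1 > 0" "u + 2 > 0"
    by linarith+
  with \<open>u > 0\<close> show ?thesis
    unfolding aS_rat_def s by (simp add: divide_simps) (simp add: algebra_simps)
qed

theorem lemma2p6:
  fixes d :: nat and r s :: real
  assumes "d \<ge> 1" and "r > -1" and "s > -1"
  shows "(\<forall>i. i + 2 \<le> d \<longrightarrow>
            aS d r s i + aS d r s (i + 1) =
              real d - (r - s) / 2
              + (r - s) * (r + s) * (2 * real d + r + s + 2)
                / (2 * (2 * real d - 2 * real i + r + s - 2) * (2 * real d - 2 * real i + r + s + 2)))
       \<and> aS d r s (d - 1) + aS d r s d = real d + (real d - 1) * (r - s) / (r + s + 4)"
proof -
  have rs: "r + s > -2"
    using assms by linarith
  have consecutive: "aS d r s i + aS d r s (i + 1) =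
              real d - (r - s) / 2
              + (r - s) * (r + s) * (2 * real d + r + s + 2)
                / (2 * (2 * real d - 2 * real i + r + s - 2) * (2 * real d - 2 * real i + r + s + 2))"
    if "i + 2 \<le> d" for i
  proof -
    have "aS d r s i + aS d r s (i + 1) = aS_rat (real d) r s (real i) + aS_rat (real d) r s (real i + 1)"
      using that aS_eq_aS_rat[OF _ rs] by (simp add: add.commute)
    also have "\<dots> = real d - (r - s) / 2
              + (r - s) * (r + s) * (2 * real d + r + s + 2)
                / (2 * (2 * real d - 2 * real i + r + s - 2) * (2 * real d - 2 * real i + r + s + 2))"
      using that rs by (intro aS_rat_consecutive_sum) linarith
    finally show ?thesis .
  qed
  have "aS d r s (d - 1) = aS_rat (real d) r s (real d - 1)"
    using aS_eq_aS_rat[OF _ rs, of "d - 1" d] assms(1) by (simp add: of_nat_diff)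
  then have "aS d r s (d - 1) + aS d r s d = real d + (real d - 1) * (r - s) / (r + s + 4)"
    using aS_rat_last_sum[OF rs] by (simp add: aS_last)
  with consecutive show ?thesis
    by blast
qed

end
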